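(* Let $d\ge 2$ be even and fix a base $\theta>1$. Let $(u_j)_{j\ge 1}$ be a real sequence and let ${\bm v}\in\mathbb{R}^d$ with $\|{\bm v}\|_2=1$. For each $n\ge 1$ let $\boldsymbol{X}_n=\boldsymbol{u}_n{\bm v}^\top\in\mathbb{R}^{n\times d}$ with $\boldsymbol{u}_n=(u_1,\dots,u_n)^\top$. Assume: (i) there exist constants $0<c\le C<\infty$ with $c\le |u_j|\le C$ for all $j$; (ii) $\sum_{j=1}^{n-1}|u_{j+1}^2-u_j^2| = o(n)$ as $n\to\infty$; (iii) $e^{2i\theta_k}\neq 1$ for all $1\le k\le d/2$, and $e^{i(\theta_k+\theta_l)}\neq 1$, $e^{i(\theta_k-\theta_l)}\neq 1$ for all $k\neq l$. Then $$\lim_{n\to\infty}\frac{\mathrm{srank}(\mathcal{R}(\boldsymbol{X}_n))}{\mathrm{srank}(\boldsymbol{X}_n)}=\frac{2}{\max_{1\le k\le d/2}\alpha_k^2}\in[2,d],$$ where $\alpha_k:=\sqrt{v_{2k-1}^2+v_{2k}^2}$.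
   Context: RoPE action: for $\boldsymbol{X}=[\boldsymbol{x}_1,\dots,\boldsymbol{x}_n]^\top\in\mathbb{R}^{n\times d}$ ($d$ even), $\mathcal{R}(\boldsymbol{X}):=[\boldsymbol{R}_1\boldsymbol{x}_1,\dots,\boldsymbol{R}_n\boldsymbol{x}_n]^\top$, where $\boldsymbol{R}_j=\mathrm{Diag}(\boldsymbol{R}_{j,\theta_1},\dots,\boldsymbol{R}_{j,\theta_{d/2}})\in\mathbb{R}^{d\times d}$ is block diagonal with $2\times2$ blocks $\boldsymbol{R}_{j,\theta_k}=\begin{bmatrix}\cos(j\theta_k)&-\sin(j\theta_k)\\ \sin(j\theta_k)&\cos(j\theta_k)\end{bmatrix}$ and frequencies $\theta_k=\theta^{-2(k-1)/d}$, $1\le k\le d/2$, for a base $\theta>1$. The stable rank of a nonzero matrix $\boldsymbol{X}$ is $\mathrm{srank}(\boldsymbol{X}):=\|\boldsymbol{X}\|_F^2/\|\boldsymbol{X}\|_2^2$, where $\|\cdot\|_F$ is the Frobenius norm and $\|\cdot\|_2$ the spectral norm. *)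

theory Defs
  imports "HOL-Analysis.Analysis" "HOL-Library.Landau_Symbols"
begin

text \<open>Matrices of size n x d are represented as functions nat => nat => real,
  using only the entries with row index i < n and column index j < d (0-indexed).\<close>

definition frob_norm :: "nat \<Rightarrow> nat \<Rightarrow> (nat \<Rightarrow> nat \<Rightarrow> real) \<Rightarrow> real" where
  "frob_norm n d X = sqrt (\<Sum>i<n. \<Sum>j<d. (X i j)^2)"

definition spec_norm :: "nat \<Rightarrow> nat \<Rightarrow> (nat \<Rightarrow> nat \<Rightarrow> real) \<Rightarrow> real" where
  "spec_norm n d X = Sup ((\<lambda>x. sqrt (\<Sum>i<n. (\<Sum>j<d. X i j * x j)^2)) ` {x. (\<Sum>j<d. (x j)^2) = 1})"

definition srank :: "nat \<Rightarrow> nat \<Rightarrow> (nat \<Rightarrow> nat \<Rightarrow> real) \<Rightarrow> real" where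
  "srank n d X = (frob_norm n d X)^2 / (spec_norm n d X)^2"

text \<open>RoPE frequency of block k, 0-indexed (k = 0 .. d/2-1); paper's theta_{k+1}.\<close>
definition rope_freq :: "real \<Rightarrow> nat \<Rightarrow> nat \<Rightarrow> real" where
  "rope_freq \<theta> d k = \<theta> powr (- (2 * real k) / real d)"

text \<open>RoPE action: row i (0-indexed) is at position j = i+1; column 2k, 2k+1 (0-indexed)
  form the k-th rotation block.\<close>
definition rope :: "real \<Rightarrow> nat \<Rightarrow> (nat \<Rightarrow> nat \<Rightarrow> real) \<Rightarrow> (nat \<Rightarrow> nat \<Rightarrow> real)" where
  "rope \<theta> d X = (\<lambda>i c.
     let k = c div 2; a = real (Suc i) * rope_freq \<theta> d k in
     if even c then cos a * X i c - sin a * X i (c + 1)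
     else sin a * X i (c - 1) + cos a * X i c)"

end

(* Write each coordinate pair (x_{2k}, x_{2k+1}) as one complex number; the RoPE rotation of
   row j then multiplies block k by cis (j theta_k). Hence the Gram form |R(X_n) x|^2 of the
   rotated rank-one matrix is a combination of the exponential sums sum_j u_j^2 cis (j omega) at
   the frequencies omega = theta_k - theta_l and omega = theta_k + theta_l. Only omega = 0, the
   diagonal k = l of the differences, contributes the main term S_n/2 * sum_k alpha_k^2 |x_k|^2,
   where S_n = sum_j u_j^2 and x_k is the k-th complex coordinate of x. By non-resonance and
   Abel summation against the o(n) variation of u_j^2 every other sum is o(n), while S_n >= c^2 n.
   Maximising over unit vectors gives |R(X_n)|_2^2 / S_n --> max_k alpha_k^2 / 2, whereas
   |R(X_n)|_F^2 = |X_n|_F^2 = |X_n|_2^2 = S_n because rotations are isometries and X_n has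
   rank one. *)

theory Submission
  imports Defs
begin

lemma norm_sum_cis_le:
  assumes "cis \<omega> \<noteq> 1"
  shows "cmod (\<Sum>j<m. cis (real (Suc j) * \<omega>)) \<le> 2 / cmod (1 - cis \<omega>)"
proof -
  have "(\<Sum>j<m. cis (real (Suc j) * \<omega>)) = cis \<omega> * (\<Sum>j<m. cis \<omega> ^ j)"
    by (simp add: sum_distrib_left Complex.DeMoivre cis_mult algebra_simps)
  also have "\<dots> = cis \<omega> * ((1 - cis \<omega> ^ m) / (1 - cis \<omega>))"
    using assms by (simp add: sum_gp_strict)
  finally have "(\<Sum>j<m. cis (real (Suc j) * \<omega>)) = \<dots>" .
  moreover have "cmod (1 - cis \<omega> ^ m) \<le> 2"
    using norm_triangle_ineq4[of 1 "cis \<omega> ^ m"] by (simp add: norm_power)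
  ultimately show ?thesis
    using assms by (simp add: norm_mult norm_divide divide_right_mono)
qed

lemma summation_by_parts:
  fixes a b :: "nat \<Rightarrow> 'a::comm_ring"
  shows "(\<Sum>i<n. a (Suc i) * b (Suc i)) =
    a n * (\<Sum>i<n. b (Suc i)) - (\<Sum>j=1..n-1. (a (Suc j) - a j) * (\<Sum>i<j. b (Suc i)))"
proof (induction n)
  case (Suc n)
  then show ?case
    by (cases n) (simp_all add: algebra_simps)
qed simp

definition weighted_cis_sum :: "(nat \<Rightarrow> real) \<Rightarrow> nat \<Rightarrow> real \<Rightarrow> complex" where
  "weighted_cis_sum a n \<omega> = (\<Sum>i<n. of_real (a (Suc i)) * cis (real (Suc i) * \<omega>))"

lemma weighted_cis_sum_0: "weighted_cis_sum a n 0 = of_real (\<Sum>i<n. a (Suc i))"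
  by (simp add: weighted_cis_sum_def)

lemma norm_weighted_cis_sum_le:
  assumes "cis \<omega> \<noteq> 1" and "\<bar>a n\<bar> \<le> B"
  shows "cmod (weighted_cis_sum a n \<omega>) \<le>
    (B + (\<Sum>j=1..n-1. \<bar>a (Suc j) - a j\<bar>)) * (2 / cmod (1 - cis \<omega>))"
proof -
  define K where "K = 2 / cmod (1 - cis \<omega>)"
  define P where "P j = (\<Sum>i<j. cis (real (Suc i) * \<omega>))" for j
  have P: "cmod (P j) \<le> K" for j
    unfolding P_def K_def by (rule norm_sum_cis_le[OF assms(1)])
  have "weighted_cis_sum a n \<omega> =
      of_real (a n) * P n - (\<Sum>j=1..n-1. of_real (a (Suc j) - a j) * P j)"
    unfolding weighted_cis_sum_def P_def
    using summation_by_parts[of "\<lambda>j. of_real (a j)" "\<lambda>j. cis (real j * \<omega>)" n] by simp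
  also have "cmod \<dots> \<le> \<bar>a n\<bar> * cmod (P n) + (\<Sum>j=1..n-1. \<bar>a (Suc j) - a j\<bar> * cmod (P j))"
    by (rule norm_triangle_ineq4[THEN order_trans], rule add_mono)
      (auto simp: norm_mult simp del: of_real_diff intro!: norm_sum[THEN order_trans])
  also have "\<dots> \<le> B * K + (\<Sum>j=1..n-1. \<bar>a (Suc j) - a j\<bar> * K)"
    using assms(2) P by (intro add_mono mult_mono sum_mono mult_left_mono) auto
  finally show ?thesis
    by (simp only: K_def distrib_right sum_distrib_right)
qed

lemma weighted_cis_sum_smallo:
  assumes "cis \<omega> \<noteq> 1" and "\<forall>j\<ge>1. \<bar>a j\<bar> \<le> B"
    and "(\<lambda>n. \<Sum>j=1..n-1. \<bar>a (Suc j) - a j\<bar>) \<in> o(\<lambda>n. real n)"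
  shows "(\<lambda>n. cmod (weighted_cis_sum a n \<omega>) / real n) \<longlonglongrightarrow> 0"
proof (rule Lim_null_comparison)
  let ?V = "\<lambda>n. \<Sum>j=1..n-1. \<bar>a (Suc j) - a j\<bar>"
  let ?K = "2 / cmod (1 - cis \<omega>)"
  have "(\<lambda>n. (B * (1 / real n) + ?V n / real n) * ?K) \<longlonglongrightarrow> (B * 0 + 0) * ?K"
    by (intro tendsto_intros lim_1_over_n smalloD_tendsto[OF assms(3)])
  then show "(\<lambda>n. (B * (1 / real n) + ?V n / real n) * ?K) \<longlonglongrightarrow> 0"
    by simp
  show "\<forall>\<^sub>F n in sequentially.
      norm (cmod (weighted_cis_sum a n \<omega>) / real n) \<le> (B * (1 / real n) + ?V n / real n) * ?K"
  proof (rule eventually_sequentiallyI)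
    fix n :: nat
    assume "1 \<le> n"
    with assms have "cmod (weighted_cis_sum a n \<omega>) \<le> (B + ?V n) * ?K"
      by (intro norm_weighted_cis_sum_le) auto
    then have "norm (cmod (weighted_cis_sum a n \<omega>) / real n) \<le> (B + ?V n) * ?K / real n"
      by (simp only: real_norm_def abs_divide abs_norm_cancel abs_of_nat divide_right_mono)
    also have "\<dots> = (B * (1 / real n) + ?V n / real n) * ?K"
      by (simp add: add_divide_distrib mult.commute)
    finally show "norm (cmod (weighted_cis_sum a n \<omega>) / real n) \<le> \<dots>" .
  qed
qed

definition block_coord :: "(nat \<Rightarrow> real) \<Rightarrow> nat \<Rightarrow> complex" where
  "block_coord x k = Complex (x (2*k)) (x (2*k+1))"

lemma sum_lessThan_double_in_pairs:
  fixes f :: "nat \<Rightarrow> 'a::comm_monoid_add"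
  shows "(\<Sum>c<2*m. f c) = (\<Sum>k<m. f (2*k) + f (2*k+1))"
  by (induction m) (simp_all add: add.assoc)

lemma norm_block_coord: "cmod (block_coord x k) = sqrt ((x (2*k))^2 + (x (2*k+1))^2)"
  by (simp add: block_coord_def complex_norm)

lemma sum_power2_eq_sum_norm_block_coord:
  "(\<Sum>c<2*K. (x c)^2) = (\<Sum>k<K. (cmod (block_coord x k))^2)"
  by (simp add: sum_lessThan_double_in_pairs norm_block_coord)

lemma norm_block_coord_le_1:
  assumes "(\<Sum>j<2*K. (x j)^2) = 1" and "k < K"
  shows "cmod (block_coord x k) \<le> 1"
proof -
  have "(cmod (block_coord x k))^2 \<le> (\<Sum>k<K. (cmod (block_coord x k))^2)"
    using assms(2) by (intro member_le_sum) auto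
  then show ?thesis
    using assms(1) by (simp add: sum_power2_eq_sum_norm_block_coord power_le_one_iff abs_square_le_1)
qed

lemma sum_mult_eq_Re_block_coord:
  "(\<Sum>c<2*K. y c * x c) = Re (\<Sum>k<K. block_coord y k * cnj (block_coord x k))"
  by (simp add: sum_lessThan_double_in_pairs Re_sum block_coord_def)

lemma block_coord_rope:
  "block_coord (rope \<theta> d X i) k = cis (real (Suc i) * rope_freq \<theta> d k) * block_coord (X i) k"
  by (simp add: rope_def block_coord_def complex_eq_iff Let_def algebra_simps)

lemma frob_norm_rope:
  assumes "even d"
  shows "frob_norm n d (rope \<theta> d X) = frob_norm n d X"
proof -
  obtain K where "d = 2*K"
    using assms by blast
  then show ?thesis
    by (simp add: frob_norm_def sum_power2_eq_sum_norm_block_coord block_coord_rope norm_mult)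
qed

definition gram_form :: "nat \<Rightarrow> nat \<Rightarrow> (nat \<Rightarrow> nat \<Rightarrow> real) \<Rightarrow> (nat \<Rightarrow> real) \<Rightarrow> real" where
  "gram_form n d X x = (\<Sum>i<n. (\<Sum>j<d. X i j * x j)^2)"

lemma power2_spec_norm_bounds:
  assumes "(\<Sum>j<d. (x0 j)^2) = 1"
    and "\<And>x. (\<Sum>j<d. (x j)^2) = 1 \<Longrightarrow> gram_form n d X x \<le> B"
  shows "gram_form n d X x0 \<le> (spec_norm n d X)^2 \<and> (spec_norm n d X)^2 \<le> B"
proof -
  define T where "T = (\<lambda>x. sqrt (gram_form n d X x)) ` {x. (\<Sum>j<d. (x j)^2) = 1}"
  have spec: "spec_norm n d X = Sup T"
    by (simp add: spec_norm_def gram_form_def T_def)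
  have T_le: "t \<le> sqrt B" if "t \<in> T" for t
    using that assms(2) by (auto simp: T_def)
  have x0: "sqrt (gram_form n d X x0) \<in> T"
    using assms(1) by (auto simp: T_def)
  have gram_nonneg: "0 \<le> gram_form n d X x0"
    by (simp add: gram_form_def sum_nonneg)
  have lower: "sqrt (gram_form n d X x0) \<le> Sup T"
    using x0 T_le by (intro cSup_upper bdd_aboveI) auto
  have upper: "Sup T \<le> sqrt B"
    using x0 T_le by (intro cSup_least) auto
  have "gram_form n d X x0 \<le> (Sup T)^2"
    using power_mono[OF lower, of 2] gram_nonneg by simp
  moreover have "(Sup T)^2 \<le> B"
    using power_mono[OF upper, of 2] order_trans[OF real_sqrt_ge_zero[OF gram_nonneg] lower]
      gram_nonneg assms(2)[OF assms(1)] by simp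
  ultimately show ?thesis
    unfolding spec ..
qed

lemma gram_form_rank_one:
  "gram_form n d (\<lambda>i j. a i * v j) x = (\<Sum>i<n. (a i)^2) * (\<Sum>j<d. v j * x j)^2"
  by (simp add: gram_form_def mult.assoc power_mult_distrib sum_distrib_right
      flip: sum_distrib_left)

lemma frob_norm_rank_one:
  assumes "(\<Sum>j<d. (v j)^2) = 1"
  shows "(frob_norm n d (\<lambda>i j. a i * v j))^2 = (\<Sum>i<n. (a i)^2)"
  using assms by (simp add: frob_norm_def power_mult_distrib sum_nonneg flip: sum_distrib_left)

lemma spec_norm_rank_one:
  assumes "(\<Sum>j<d. (v j)^2) = 1"
  shows "(spec_norm n d (\<lambda>i j. a i * v j))^2 = (\<Sum>i<n. (a i)^2)"
proof -
  have "(\<Sum>j<d. v j * x j)^2 \<le> 1" if "(\<Sum>j<d. (x j)^2) = 1" for x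
    using Cauchy_Schwarz_ineq_sum[of v x "{..<d}"] assms that by simp
  then have "gram_form n d (\<lambda>i j. a i * v j) x \<le> (\<Sum>i<n. (a i)^2)"
    if "(\<Sum>j<d. (x j)^2) = 1" for x
    using that by (simp add: gram_form_rank_one mult_left_le sum_nonneg)
  moreover have "gram_form n d (\<lambda>i j. a i * v j) v = (\<Sum>i<n. (a i)^2)"
    using assms by (simp add: gram_form_rank_one power2_eq_square)
  ultimately show ?thesis
    using power2_spec_norm_bounds[OF assms, of n "\<lambda>i j. a i * v j" "\<Sum>i<n. (a i)^2"]
    by (simp add: order_antisym)
qed

lemma srank_rope_rank_one_ratio:
  assumes "even d" and "(\<Sum>j<d. (v j)^2) = 1"
  shows "srank n d (rope \<theta> d (\<lambda>i j. a i * v j)) / srank n d (\<lambda>i j. a i * v j) =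
    (\<Sum>i<n. (a i)^2) / (spec_norm n d (rope \<theta> d (\<lambda>i j. a i * v j)))^2"
  unfolding srank_def frob_norm_rope[OF assms(1)] frob_norm_rank_one[OF assms(2)]
    spec_norm_rank_one[OF assms(2)]
  by (cases "(\<Sum>i<n. (a i)^2) = 0") auto

lemma power2_Re_sum_cis:
  fixes w :: "nat \<Rightarrow> complex" and \<phi> :: "nat \<Rightarrow> real"
  shows "(Re (\<Sum>k\<in>A. cis (\<phi> k) * w k))^2 =
    Re (\<Sum>k\<in>A. \<Sum>l\<in>A. cis (\<phi> k - \<phi> l) * w k * cnj (w l) + cis (\<phi> k + \<phi> l) * w k * w l) / 2"
proof -
  let ?s = "\<Sum>k\<in>A. cis (\<phi> k) * w k"
  have Re_sq: "(Re z)^2 = Re (z * cnj z + z * z) / 2" for z :: complex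
    by (simp add: power2_eq_square algebra_simps)
  have "?s * cnj ?s = (\<Sum>k\<in>A. \<Sum>l\<in>A. cis (\<phi> k - \<phi> l) * w k * cnj (w l))"
    unfolding cnj_sum sum_product
    by (intro sum.cong refl) (simp add: cis_cnj cis_mult mult_ac)
  moreover have "?s * ?s = (\<Sum>k\<in>A. \<Sum>l\<in>A. cis (\<phi> k + \<phi> l) * w k * w l)"
    unfolding sum_product by (intro sum.cong refl) (simp add: cis_mult mult_ac)
  ultimately show ?thesis
    unfolding Re_sq[of ?s] by (simp add: sum.distrib)
qed

lemma gram_form_rope_rank_one:
  fixes u v x :: "nat \<Rightarrow> real" and n K :: nat and \<theta> :: real
  defines "G \<equiv> weighted_cis_sum (\<lambda>j. (u j)^2) n"
    and "f \<equiv> rope_freq \<theta> (2*K)"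
    and "w \<equiv> \<lambda>k. block_coord v k * cnj (block_coord x k)"
  shows "gram_form n (2*K) (rope \<theta> (2*K) (\<lambda>i j. u (Suc i) * v j)) x =
    Re (\<Sum>k<K. \<Sum>l<K. G (f k - f l) * w k * cnj (w l) + G (f k + f l) * w k * w l) / 2"
proof -
  have row: "(\<Sum>c<2*K. rope \<theta> (2*K) (\<lambda>i j. u (Suc i) * v j) i c * x c) =
      u (Suc i) * Re (\<Sum>k<K. cis (real (Suc i) * f k) * w k)" for i
  proof -
    have scale: "block_coord (\<lambda>j. u (Suc i) * v j) k = of_real (u (Suc i)) * block_coord v k" for k
      by (simp add: block_coord_def complex_eq_iff)
    have "(\<Sum>c<2*K. rope \<theta> (2*K) (\<lambda>i j. u (Suc i) * v j) i c * x c) =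
        Re (\<Sum>k<K. of_real (u (Suc i)) * (cis (real (Suc i) * f k) * w k))"
      unfolding sum_mult_eq_Re_block_coord block_coord_rope scale f_def w_def
      by (simp only: mult.assoc mult.left_commute)
    then show ?thesis
      by (simp flip: sum_distrib_left)
  qed
  have "gram_form n (2*K) (rope \<theta> (2*K) (\<lambda>i j. u (Suc i) * v j)) x =
      (\<Sum>i<n. (u (Suc i))^2 * (Re (\<Sum>k<K. cis (real (Suc i) * f k) * w k))^2)"
    by (simp add: gram_form_def row power_mult_distrib)
  also have "\<dots> = Re (\<Sum>i<n. of_real ((u (Suc i))^2) * (\<Sum>k<K. \<Sum>l<K.
      cis (real (Suc i) * (f k - f l)) * w k * cnj (w l)
      + cis (real (Suc i) * (f k + f l)) * w k * w l)) / 2"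
    unfolding power2_Re_sum_cis times_divide_eq_right
    by (simp add: Re_sum sum_divide_distrib right_diff_distrib distrib_left)
  also have "(\<Sum>i<n. of_real ((u (Suc i))^2) * (\<Sum>k<K. \<Sum>l<K.
      cis (real (Suc i) * (f k - f l)) * w k * cnj (w l)
      + cis (real (Suc i) * (f k + f l)) * w k * w l)) =
      (\<Sum>k<K. \<Sum>l<K. \<Sum>i<n. of_real ((u (Suc i))^2) *
        (cis (real (Suc i) * (f k - f l)) * w k * cnj (w l)
         + cis (real (Suc i) * (f k + f l)) * w k * w l))"
    unfolding sum_distrib_left
    by (subst sum.swap, rule sum.cong, rule refl, rule sum.swap)
  also have "\<dots> = (\<Sum>k<K. \<Sum>l<K. G (f k - f l) * w k * cnj (w l) + G (f k + f l) * w k * w l)"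
    unfolding G_def weighted_cis_sum_def distrib_left sum.distrib sum_distrib_right
    by (simp add: mult.assoc)
  finally show ?thesis .
qed

lemma Re_double_sum_diagonal_approx:
  fixes G :: "real \<Rightarrow> complex" and f :: "nat \<Rightarrow> real" and w :: "nat \<Rightarrow> complex"
  assumes G0: "G 0 = of_real S" and w_le_1: "\<forall>k<K. cmod (w k) \<le> 1"
  shows "\<bar>Re (\<Sum>k<K. \<Sum>l<K. G (f k - f l) * w k * cnj (w l) + G (f k + f l) * w k * w l) / 2
          - S / 2 * (\<Sum>k<K. (cmod (w k))^2)\<bar>
       \<le> (\<Sum>k<K. \<Sum>l<K. (if k = l then 0 else cmod (G (f k - f l))) + cmod (G (f k + f l))) / 2"
proof -
  define H where "H k l = (if k = l then 0 else G (f k - f l))" for k l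
  define R where "R = (\<Sum>k<K. \<Sum>l<K. H k l * w k * cnj (w l) + G (f k + f l) * w k * w l)"
  have "G (f k - f l) * w k * cnj (w l) =
      H k l * w k * cnj (w l) + (if l = k then of_real (S * (cmod (w k))^2) else 0)" for k l
    by (simp add: H_def G0 mult.assoc flip: complex_norm_square)
  then have "(\<Sum>k<K. \<Sum>l<K. G (f k - f l) * w k * cnj (w l) + G (f k + f l) * w k * w l) =
      R + of_real (S * (\<Sum>k<K. (cmod (w k))^2))"
    by (simp add: R_def sum.distrib sum_distrib_left algebra_simps)
  then have diff: "Re (\<Sum>k<K. \<Sum>l<K. G (f k - f l) * w k * cnj (w l) + G (f k + f l) * w k * w l) / 2
      - S / 2 * (\<Sum>k<K. (cmod (w k))^2) = Re R / 2"
    by (simp add: field_simps)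
  have "cmod (H k l * w k * cnj (w l) + G (f k + f l) * w k * w l) \<le>
      cmod (H k l) + cmod (G (f k + f l))" if "k < K" "l < K" for k l
  proof -
    have "cmod (w k) * cmod (w l) \<le> 1"
      using w_le_1 that by (simp add: mult_le_one)
    then have "cmod (H k l * w k * cnj (w l)) \<le> cmod (H k l)"
      and "cmod (G (f k + f l) * w k * w l) \<le> cmod (G (f k + f l))"
      by (simp_all add: norm_mult mult.assoc mult_left_le)
    then show ?thesis
      by (meson add_mono norm_triangle_ineq order_trans)
  qed
  then have "cmod R \<le> (\<Sum>k<K. \<Sum>l<K. cmod (H k l) + cmod (G (f k + f l)))"
    unfolding R_def by (intro norm_sum[THEN order_trans] sum_mono) auto
  moreover have "cmod (H k l) = (if k = l then 0 else cmod (G (f k - f l)))" for k l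
    by (simp add: H_def)
  ultimately show ?thesis
    unfolding diff using abs_Re_le_cmod[of R] by simp
qed

definition rope_error :: "(nat \<Rightarrow> real) \<Rightarrow> real \<Rightarrow> nat \<Rightarrow> nat \<Rightarrow> real" where
  "rope_error a \<theta> K n = (\<Sum>k<K. \<Sum>l<K.
     (if k = l then 0 else cmod (weighted_cis_sum a n (rope_freq \<theta> (2*K) k - rope_freq \<theta> (2*K) l)))
     + cmod (weighted_cis_sum a n (rope_freq \<theta> (2*K) k + rope_freq \<theta> (2*K) l))) / 2"

lemma gram_form_rope_rank_one_approx:
  assumes "(\<Sum>j<2*K. (v j)^2) = 1" and "(\<Sum>j<2*K. (x j)^2) = 1"
  shows "\<bar>gram_form n (2*K) (rope \<theta> (2*K) (\<lambda>i j. u (Suc i) * v j)) x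
      - (\<Sum>i<n. (u (Suc i))^2) / 2 *
        (\<Sum>k<K. (cmod (block_coord v k))^2 * (cmod (block_coord x k))^2)\<bar>
    \<le> rope_error (\<lambda>j. (u j)^2) \<theta> K n"
proof -
  have "\<forall>k<K. cmod (block_coord v k * cnj (block_coord x k)) \<le> 1"
    using norm_block_coord_le_1[OF assms(1)] norm_block_coord_le_1[OF assms(2)]
    by (simp add: norm_mult mult_le_one)
  from Re_double_sum_diagonal_approx[where G = "weighted_cis_sum (\<lambda>j. (u j)^2) n",
    OF weighted_cis_sum_0 this] show ?thesis
    unfolding gram_form_rope_rank_one rope_error_def norm_mult complex_mod_cnj power_mult_distrib .
qed

lemma sum_mult_le_Max:
  fixes p q :: "'a \<Rightarrow> real"
  assumes "finite A" and "\<And>k. k \<in> A \<Longrightarrow> 0 \<le> q k" and "sum q A = 1"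
  shows "(\<Sum>k\<in>A. p k * q k) \<le> Max (p ` A)"
proof -
  have "(\<Sum>k\<in>A. p k * q k) \<le> (\<Sum>k\<in>A. Max (p ` A) * q k)"
    using assms by (intro sum_mono mult_right_mono) auto
  also have "\<dots> = Max (p ` A)"
    using assms(3) by (simp flip: sum_distrib_left)
  finally show ?thesis .
qed

lemma Max_bounds_of_sum_eq_1:
  fixes p :: "'a \<Rightarrow> real"
  assumes "finite A" and "\<And>k. k \<in> A \<Longrightarrow> 0 \<le> p k" and "sum p A = 1"
  shows "1 \<le> real (card A) * Max (p ` A)" and "Max (p ` A) \<le> 1"
proof -
  have "A \<noteq> {}"
    using assms(3) by auto
  have "sum p A \<le> (\<Sum>k\<in>A. Max (p ` A))"
    using assms(1) by (intro sum_mono) auto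
  then show "1 \<le> real (card A) * Max (p ` A)"
    using assms(3) by simp
  have "Max (p ` A) \<in> p ` A"
    using assms(1) \<open>A \<noteq> {}\<close> by simp
  then obtain k where "k \<in> A" "Max (p ` A) = p k"
    by auto
  then show "Max (p ` A) \<le> 1"
    using member_le_sum[of k A p] assms by simp
qed

lemma spec_norm_rope_rank_one_approx:
  assumes v: "(\<Sum>j<2*K. (v j)^2) = 1"
  shows "\<bar>(spec_norm n (2*K) (rope \<theta> (2*K) (\<lambda>i j. u (Suc i) * v j)))^2
      - (\<Sum>i<n. (u (Suc i))^2) / 2 * (MAX k\<in>{..<K}. (cmod (block_coord v k))^2)\<bar>
    \<le> rope_error (\<lambda>j. (u j)^2) \<theta> K n"
proof -
  let ?RX = "rope \<theta> (2*K) (\<lambda>i j. u (Suc i) * v j)"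
  let ?S = "\<Sum>i<n. (u (Suc i))^2"
  let ?M = "MAX k\<in>{..<K}. (cmod (block_coord v k))^2"
  let ?E = "rope_error (\<lambda>j. (u j)^2) \<theta> K n"
  let ?W = "\<lambda>x. \<Sum>k<K. (cmod (block_coord v k))^2 * (cmod (block_coord x k))^2"
  have "K \<noteq> 0"
    using v by (intro notI) simp
  then have "?M \<in> (\<lambda>k. (cmod (block_coord v k))^2) ` {..<K}"
    by (intro Max_in) auto
  then obtain k0 where k0: "k0 < K" "(cmod (block_coord v k0))^2 = ?M"
    by auto
  define x0 where "x0 j = (if j = 2*k0 then 1 else 0 :: real)" for j
  have "(x0 j)^2 = (if j = 2*k0 then 1 else 0)" for j
    by (simp add: x0_def)
  then have x0_unit: "(\<Sum>j<2*K. (x0 j)^2) = 1"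
    using k0(1) by simp
  have x0_blocks: "(cmod (block_coord x0 k))^2 = of_bool (k = k0)" for k
    by (auto simp: x0_def norm_block_coord)
  have W_x0: "?W x0 = ?M"
    unfolding x0_blocks using k0 by simp
  have "?W x \<le> ?M" if "(\<Sum>j<2*K. (x j)^2) = 1" for x
    using that by (intro sum_mult_le_Max) (simp_all add: sum_power2_eq_sum_norm_block_coord)
  then have "gram_form n (2*K) ?RX x \<le> ?S / 2 * ?M + ?E" if "(\<Sum>j<2*K. (x j)^2) = 1" for x
    using gram_form_rope_rank_one_approx[OF v that, of n \<theta> u] that
      mult_left_mono[of "?W x" ?M "?S / 2"] by (simp add: abs_le_iff sum_nonneg)
  moreover have "?S / 2 * ?M - ?E \<le> gram_form n (2*K) ?RX x0"
    using gram_form_rope_rank_one_approx[OF v x0_unit, of n \<theta> u] W_x0 by (simp add: abs_le_iff)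
  ultimately show ?thesis
    using power2_spec_norm_bounds[OF x0_unit, of n ?RX "?S / 2 * ?M + ?E"]
    by (simp add: abs_le_iff)
qed

lemma rope_error_smallo:
  assumes "\<forall>k<K. cis (2 * rope_freq \<theta> (2*K) k) \<noteq> 1"
    and "\<forall>k<K. \<forall>l<K. k \<noteq> l \<longrightarrow>
      cis (rope_freq \<theta> (2*K) k + rope_freq \<theta> (2*K) l) \<noteq> 1 \<and>
      cis (rope_freq \<theta> (2*K) k - rope_freq \<theta> (2*K) l) \<noteq> 1"
    and "\<forall>j\<ge>1. \<bar>a j\<bar> \<le> B"
    and "(\<lambda>n. \<Sum>j=1..n-1. \<bar>a (Suc j) - a j\<bar>) \<in> o(\<lambda>n. real n)"
  shows "(\<lambda>n. rope_error a \<theta> K n / real n) \<longlonglongrightarrow> 0"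
proof -
  let ?f = "rope_freq \<theta> (2*K)"
  let ?g = "\<lambda>n \<omega>. cmod (weighted_cis_sum a n \<omega>) / real n"
  have G: "(\<lambda>n. ?g n \<omega>) \<longlonglongrightarrow> 0" if "cis \<omega> \<noteq> 1" for \<omega>
    using weighted_cis_sum_smallo[OF that assms(3,4)] .
  have "(\<lambda>n. (if k = l then 0 else ?g n (?f k - ?f l)) + ?g n (?f k + ?f l)) \<longlonglongrightarrow> 0"
    if "k < K" "l < K" for k l
  proof (cases "k = l")
    case True
    then have "cis (?f k + ?f l) \<noteq> 1"
      using assms(1) that by (simp flip: mult_2)
    then show ?thesis
      using G True by simp
  next
    case False
    then show ?thesis
      using assms(2) that by (simp, intro tendsto_add_zero G) auto
  qed
  then have "(\<lambda>n. (\<Sum>k<K. \<Sum>l<K. (if k = l then 0 else ?g n (?f k - ?f l)) + ?g n (?f k + ?f l)) / 2)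
      \<longlonglongrightarrow> (\<Sum>k<K. \<Sum>l<K. 0) / 2"
    by (intro tendsto_divide tendsto_sum tendsto_const) auto
  moreover have "(\<lambda>n. rope_error a \<theta> K n / real n) =
      (\<lambda>n. (\<Sum>k<K. \<Sum>l<K. (if k = l then 0 else ?g n (?f k - ?f l)) + ?g n (?f k + ?f l)) / 2)"
    by (auto simp: rope_error_def sum_divide_distrib add_divide_distrib intro!: sum.cong)
  ultimately show ?thesis
    by simp
qed

lemma spec_norm_rope_rank_one_tendsto:
  assumes "(\<Sum>j<2*K. (v j)^2) = 1" and "0 < c" and "\<forall>j\<ge>1. c \<le> \<bar>u j\<bar>"
    and "(\<lambda>n. rope_error (\<lambda>j. (u j)^2) \<theta> K n / real n) \<longlonglongrightarrow> 0"
  shows "(\<lambda>n. (spec_norm n (2*K) (rope \<theta> (2*K) (\<lambda>i j. u (Suc i) * v j)))^2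
      / (\<Sum>i<n. (u (Suc i))^2)) \<longlonglongrightarrow> (MAX k\<in>{..<K}. (cmod (block_coord v k))^2) / 2"
proof -
  let ?P = "\<lambda>n. (spec_norm n (2*K) (rope \<theta> (2*K) (\<lambda>i j. u (Suc i) * v j)))^2"
  let ?S = "\<lambda>n. \<Sum>i<n. (u (Suc i))^2"
  let ?M = "MAX k\<in>{..<K}. (cmod (block_coord v k))^2"
  let ?E = "\<lambda>n. rope_error (\<lambda>j. (u j)^2) \<theta> K n"
  have S_ge: "real n * c^2 \<le> ?S n" for n
  proof -
    have "c^2 \<le> (u (Suc i))^2" for i
      using power_mono[OF assms(3)[rule_format, of "Suc i"], of 2] assms(2) by simp
    then have "(\<Sum>i<n. c^2) \<le> ?S n"
      by (intro sum_mono)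
    then show ?thesis
      by simp
  qed
  have "(\<lambda>n. ?P n / ?S n - ?M / 2) \<longlonglongrightarrow> 0"
  proof (rule Lim_null_comparison)
    show "(\<lambda>n. ?E n / real n / c^2) \<longlonglongrightarrow> 0"
      using tendsto_divide_zero[OF assms(4)] .
    show "\<forall>\<^sub>F n in sequentially. norm (?P n / ?S n - ?M / 2) \<le> ?E n / real n / c^2"
    proof (rule eventually_sequentiallyI)
      fix n :: nat
      assume "1 \<le> n"
      then have S_pos: "0 < real n * c^2"
        using assms(2) by simp
      have approx: "\<bar>?P n - ?S n / 2 * ?M\<bar> \<le> ?E n"
        using spec_norm_rope_rank_one_approx[OF assms(1)] .
      have "norm (?P n / ?S n - ?M / 2) = \<bar>?P n - ?S n / 2 * ?M\<bar> / ?S n"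
        using S_pos S_ge[of n] by (simp add: field_simps)
      also have "\<dots> \<le> ?E n / (real n * c^2)"
        using approx S_pos S_ge[of n] by (intro frac_le) auto
      finally show "norm (?P n / ?S n - ?M / 2) \<le> ?E n / real n / c^2"
        by (simp add: field_simps)
    qed
  qed
  then show ?thesis
    by (rule LIM_zero_cancel)
qed

theorem theorem1:
  fixes d :: nat and \<theta> :: real and u :: "nat \<Rightarrow> real" and v :: "nat \<Rightarrow> real"
    and c C :: real
  assumes "d \<ge> 2" and "even d" and "\<theta> > 1"
    and "(\<Sum>j<d. (v j)^2) = 1"
    and "0 < c" and "c \<le> C" and "\<forall>j\<ge>1. c \<le> \<bar>u j\<bar> \<and> \<bar>u j\<bar> \<le> C"
    and "(\<lambda>n. \<Sum>j=1..n-1. \<bar>(u (j+1))^2 - (u j)^2\<bar>) \<in> o(\<lambda>n. real n)"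
    and "\<forall>k<d div 2. exp (\<i> * complex_of_real (2 * rope_freq \<theta> d k)) \<noteq> 1"
    and "\<forall>k<d div 2. \<forall>l<d div 2. k \<noteq> l \<longrightarrow>
            exp (\<i> * complex_of_real (rope_freq \<theta> d k + rope_freq \<theta> d l)) \<noteq> 1 \<and>
            exp (\<i> * complex_of_real (rope_freq \<theta> d k - rope_freq \<theta> d l)) \<noteq> 1"
  shows "((\<lambda>n. srank n d (rope \<theta> d (\<lambda>i j. u (Suc i) * v j))
                / srank n d (\<lambda>i j. u (Suc i) * v j))
          \<longlongrightarrow> 2 / (MAX k\<in>{..<d div 2}. (sqrt ((v (2*k))^2 + (v (2*k+1))^2))^2)) sequentially
       \<and> 2 / (MAX k\<in>{..<d div 2}. (sqrt ((v (2*k))^2 + (v (2*k+1))^2))^2) \<in> {2..real d}"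
proof -
  obtain K where d: "d = 2*K"
    using \<open>even d\<close> by blast
  let ?M = "MAX k\<in>{..<K}. (cmod (block_coord v k))^2"
  let ?X = "\<lambda>i j. u (Suc i) * v j"
  have v: "(\<Sum>j<2*K. (v j)^2) = 1"
    using assms(4) d by simp
  have M_eq: "(MAX k\<in>{..<d div 2}. (sqrt ((v (2*k))^2 + (v (2*k+1))^2))^2) = ?M"
    by (simp add: d norm_block_coord)
  have M_ge: "1 \<le> real K * ?M" and M_le: "?M \<le> 1"
    using Max_bounds_of_sum_eq_1[of "{..<K}" "\<lambda>k. (cmod (block_coord v k))^2"] v
    by (simp_all add: sum_power2_eq_sum_norm_block_coord)
  have M_pos: "0 < ?M"
    using order_less_le_trans[OF zero_less_one M_ge] by (simp add: zero_less_mult_iff)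
  with M_ge M_le have range: "2 / ?M \<in> {2..real d}"
    by (simp add: d le_divide_eq divide_le_eq)
  have "\<forall>j\<ge>1. \<bar>(u j)^2\<bar> \<le> C^2"
    using assms(7) power_mono[OF _ abs_ge_zero, of "u _" C 2] by simp
  then have "(\<lambda>n. rope_error (\<lambda>j. (u j)^2) \<theta> K n / real n) \<longlonglongrightarrow> 0"
    using assms(8-10) by (intro rope_error_smallo) (simp_all add: d cis_conv_exp)
  then have "(\<lambda>n. (spec_norm n d (rope \<theta> d ?X))^2 / (\<Sum>i<n. (u (Suc i))^2)) \<longlonglongrightarrow> ?M / 2"
    using spec_norm_rope_rank_one_tendsto[OF v \<open>0 < c\<close>] assms(7) d by simp
  then have "(\<lambda>n. inverse ((spec_norm n d (rope \<theta> d ?X))^2 / (\<Sum>i<n. (u (Suc i))^2)))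
      \<longlonglongrightarrow> inverse (?M / 2)"
    using M_pos by (intro tendsto_inverse) auto
  then have "(\<lambda>n. srank n d (rope \<theta> d ?X) / srank n d ?X) \<longlonglongrightarrow> 2 / ?M"
    using srank_rope_rank_one_ratio[OF \<open>even d\<close> assms(4), where a = "\<lambda>i. u (Suc i)"]
    by (simp add: inverse_divide)
  then show ?thesis
    using range M_eq by simp
qed

end
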